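(* Let $\mathcal{S}=\langle\mathcal{L},\vdash\rangle$ be a logical structure and $\varrho\subseteq\mathcal{P}(\mathcal{L})\times\mathcal{L}$. (i) $\langle\mathcal{L},\vdash^\varrho\rangle$ and $\langle\mathcal{L},\vdash^{p\varrho}\rangle$ are monotonic. (ii) If $\mathcal{S}$ is monotonic, then $\vdash^\varrho\,\subseteq\,\vdash$ and $\vdash^{p\varrho}\,\subseteq\,\vdash$. (iii) $(\vdash^\varrho)^\varrho\,=\,\vdash^\varrho$ and $(\vdash^{p\varrho})^{p\varrho}\,=\,\vdash^{p\varrho}$.
   Context: A logical structure is a pair $\langle\mathcal{L},\vdash\rangle$ where $\mathcal{L}$ is a set and $\vdash\subseteq\mathcal{P}(\mathcal{L})\times\mathcal{L}$ (no further conditions). It is monotonic if $\Gamma\vdash\alpha$ and $\Gamma\subseteq\Sigma$ imply $\Sigma\vdash\alpha$. For $\varrho\subseteq\mathcal{P}(\mathcal{L})\times\mathcal{L}$, the $\varrho$-companion $\vdash^\varrho$ is defined by: $\Gamma\vdash^\varrho\alpha$ iff there is $\Delta\subseteq\Gamma$ with $(\Delta,\alpha)\in\varrho$ and $\Delta\vdash\alpha$. The pure $\varrho$-companion $\vdash^{p\varrho}$ is defined by: $\Gamma\vdash^{p\varrho}\alpha$ iff there is a nonempty $\Delta\subseteq\Gamma$ with $(\Delta,\alpha)\in\varrho$ and $\Delta\vdash\alpha$. $(\vdash^\varrho)^\varrho$ is the $\varrho$-companion of $\langle\mathcal{L},\vdash^\varrho\rangle$, and similarly for the pure case. *)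

theory Defs
  imports Main
begin

text \<open>A logical structure over the type 'a (the set L is UNIV :: 'a set);
  the consequence relation is a predicate on (set of formulas, formula).\<close>

definition monotonic :: "('a set \<Rightarrow> 'a \<Rightarrow> bool) \<Rightarrow> bool" where
  "monotonic D \<longleftrightarrow> (\<forall>\<Gamma> \<Sigma> \<alpha>. D \<Gamma> \<alpha> \<and> \<Gamma> \<subseteq> \<Sigma> \<longrightarrow> D \<Sigma> \<alpha>)"

definition companion :: "('a set \<times> 'a) set \<Rightarrow> ('a set \<Rightarrow> 'a \<Rightarrow> bool) \<Rightarrow> ('a set \<Rightarrow> 'a \<Rightarrow> bool)" where
  "companion \<rho> D = (\<lambda>\<Gamma> \<alpha>. \<exists>\<Delta>. \<Delta> \<subseteq> \<Gamma> \<and> (\<Delta>, \<alpha>) \<in> \<rho> \<and> D \<Delta> \<alpha>)"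

definition pure_companion :: "('a set \<times> 'a) set \<Rightarrow> ('a set \<Rightarrow> 'a \<Rightarrow> bool) \<Rightarrow> ('a set \<Rightarrow> 'a \<Rightarrow> bool)" where
  "pure_companion \<rho> D = (\<lambda>\<Gamma> \<alpha>. \<exists>\<Delta>. \<Delta> \<noteq> {} \<and> \<Delta> \<subseteq> \<Gamma> \<and> (\<Delta>, \<alpha>) \<in> \<rho> \<and> D \<Delta> \<alpha>)"

end

theory Submission
  imports Defs
begin

lemma monotonic_companion: "monotonic (companion \<rho> D)"
  unfolding monotonic_def companion_def by blast

lemma monotonic_pure_companion: "monotonic (pure_companion \<rho> D)"
  unfolding monotonic_def pure_companion_def by blast

lemma companion_imp:
  assumes "monotonic D" and "companion \<rho> D \<Gamma> \<alpha>"
  shows "D \<Gamma> \<alpha>"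
  using assms unfolding monotonic_def companion_def by blast

lemma pure_companion_imp:
  assumes "monotonic D" and "pure_companion \<rho> D \<Gamma> \<alpha>"
  shows "D \<Gamma> \<alpha>"
  using assms unfolding monotonic_def pure_companion_def by blast

text \<open>For both companions, a witness \<open>\<Delta>\<close> for \<open>\<Gamma>\<close> is also a witness for itself, and
  witnesses compose by transitivity of \<open>\<subseteq>\<close>.\<close>

lemma companion_companion: "companion \<rho> (companion \<rho> D) = companion \<rho> D"
  unfolding companion_def by (intro ext) blast

lemma pure_companion_pure_companion:
  "pure_companion \<rho> (pure_companion \<rho> D) = pure_companion \<rho> D"
  unfolding pure_companion_def by (intro ext) blast

theorem theorem3p6:
  fixes D :: "'a set \<Rightarrow> 'a \<Rightarrow> bool" and \<rho> :: "('a set \<times> 'a) set"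
  shows "(monotonic (companion \<rho> D) \<and> monotonic (pure_companion \<rho> D)) \<and>
         (monotonic D \<longrightarrow>
           (\<forall>\<Gamma> \<alpha>. companion \<rho> D \<Gamma> \<alpha> \<longrightarrow> D \<Gamma> \<alpha>) \<and>
           (\<forall>\<Gamma> \<alpha>. pure_companion \<rho> D \<Gamma> \<alpha> \<longrightarrow> D \<Gamma> \<alpha>)) \<and>
         (companion \<rho> (companion \<rho> D) = companion \<rho> D \<and>
          pure_companion \<rho> (pure_companion \<rho> D) = pure_companion \<rho> D)"
  by (intro conjI impI allI monotonic_companion monotonic_pure_companion
      companion_companion pure_companion_pure_companion)
    (auto intro: companion_imp pure_companion_imp)

end
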